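(* Let $K$ be a finite field of characteristic $p$ and order $q$, let $s$ be a positive integer with $\gcd(s,q-1)=1$, and let $\tau$ be the permutation of $\mathcal{W}_{K,s}$ defined below. If $p=2$, the cycle type of $\tau$ consists of $|\mathcal{W}_{K,s}|$ instances of $1$. If $p$ is odd, the cycle type of $\tau$ contains no number larger than $(p-1)/2$.
   Context: $\zeta=\exp(2\pi i/p)$, $\psi(x)=\zeta^{\mathrm{Tr}(x)}$ with $\mathrm{Tr}$ the absolute trace of $K$ to $\mathbb{F}_p$; $W_u=\sum_{x\in K}\psi(x^s-ux)$; $\mathcal{W}_{K,s}=\{W_u:u\in K^\times\}$. Let $\gamma$ be a primitive element of $\mathbb{F}_p$ and $\sigma\in\mathrm{Gal}(\mathbb{Q}(\zeta)/\mathbb{Q})$ with $\sigma(\zeta)=\zeta^\gamma$; it is known that $\sigma(W_u)=W_{\gamma^{1-1/s}u}$ (with $1/s$ the inverse of $s$ mod $p-1$), so $\sigma$ restricts to a permutation $\tau$ of $\mathcal{W}_{K,s}$. The cycle type of a permutation is the multiset of lengths of the cycles in its decomposition into disjoint cycles. *)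

theory Defs
  imports Complex_Main "HOL-Number_Theory.Number_Theory" "HOL-Library.Multiset" "HOL-Library.Cardinality"
begin

definition field_degree :: "'a::{field,finite} itself \<Rightarrow> nat" where
  "field_degree (t::'a itself) = (THE n. CHAR('a) ^ n = CARD('a))"

definition abs_trace :: "'a::{field,finite} \<Rightarrow> 'a" where
  "abs_trace x = (\<Sum>i<field_degree TYPE('a). x ^ (CHAR('a) ^ i))"

definition abs_trace_nat :: "'a::{field,finite} \<Rightarrow> nat" where
  "abs_trace_nat x = (THE k. k < CHAR('a) \<and> of_nat k = abs_trace x)"

definition zeta :: "nat \<Rightarrow> complex" where
  "zeta p = cis (2 * pi / real p)"

definition psi :: "'a::{field,finite} \<Rightarrow> complex" where
  "psi x = zeta CHAR('a) ^ abs_trace_nat x"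

definition weil_sum :: "nat \<Rightarrow> 'a::{field,finite} \<Rightarrow> complex" where
  "weil_sum s u = (\<Sum>x\<in>UNIV. psi (x ^ s - u * x))"

definition weil_spectrum :: "'a::{field,finite} itself \<Rightarrow> nat \<Rightarrow> complex set" where
  "weil_spectrum (t::'a itself) s = (\<lambda>u::'a. weil_sum s u) ` (UNIV - {0})"

text \<open>The automorphism sigma of Q(zeta_p) with sigma(zeta) = zeta^g, on elements of Z[zeta]:
  an element written as sum_{j<p} c_j zeta^j is sent to sum_{j<p} c_j zeta^(g j).\<close>
definition galois_sigma :: "nat \<Rightarrow> nat \<Rightarrow> complex \<Rightarrow> complex" where
  "galois_sigma p g z = (THE w. \<exists>c::nat \<Rightarrow> int.
      z = (\<Sum>j<p. of_int (c j) * zeta p ^ j) \<and> w = (\<Sum>j<p. of_int (c j) * zeta p ^ (g * j)))"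

definition orbit_of :: "('b \<Rightarrow> 'b) \<Rightarrow> 'b \<Rightarrow> 'b set" where
  "orbit_of f w = {(f ^^ n) w | n. True}"

definition cycle_type :: "('b \<Rightarrow> 'b) \<Rightarrow> 'b set \<Rightarrow> nat multiset" where
  "cycle_type f A = image_mset card (mset_set (orbit_of f ` A))"

end

(* The map sigma: zeta -> zeta^g is well defined on integer combinations of powers of zeta
   because Phi_p = 1 + X + ... + X^(p-1) is irreducible over Z (reduce modulo p).
   On a Weil sum, sigma multiplies the trace by g, i.e. replaces psi(y) by psi(g y).  Since
   x -> x^s is a bijection of K, write g = c^s; the substitution x = y / c then gives
   sigma(W_u) = W_(l u) with l = g / c, and l^s = g^(s-1).  For p = 2 we have g = 1, hence l = 1
   and sigma fixes every W_u.  For odd p the exponent s is odd (it is prime to the even q - 1),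
   so l^((p-1)/2) is an s-th root of g^((p-1)(s-1)/2) = 1, hence equal to 1, and every cycle of
   sigma has length at most (p-1)/2. *)
theory Submission
  imports Defs "HOL-Computational_Algebra.Polynomial_Factorial"
begin

section \<open>Integer polynomials and the cyclotomic polynomial\<close>

lemma map_poly_of_int_add:
  "map_poly of_int (P + Q) = (map_poly of_int P + map_poly of_int Q :: 'a::comm_ring_1 poly)"
  by (rule poly_eqI) (simp add: coeff_map_poly)

lemma map_poly_of_int_mult:
  "map_poly of_int (P * Q) = (map_poly of_int P * map_poly of_int Q :: 'a::comm_ring_1 poly)"
  by (rule poly_eqI) (simp add: coeff_map_poly coeff_mult)

lemma map_poly_of_int_power:
  "map_poly of_int (P ^ n) = (map_poly of_int P ^ n :: 'a::comm_ring_1 poly)"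
  by (induction n) (simp_all add: map_poly_of_int_mult)

lemma map_poly_of_int_sum:
  "map_poly of_int (\<Sum>i\<in>A. f i) = (\<Sum>i\<in>A. map_poly of_int (f i) :: 'a::comm_ring_1 poly)"
  by (induction A rule: infinite_finite_induct) (simp_all add: map_poly_of_int_add)

lemma map_poly_of_int_smult:
  "map_poly of_int (smult c P) = (smult (of_int c) (map_poly of_int P) :: 'a::comm_ring_1 poly)"
  by (rule poly_eqI) (simp add: coeff_map_poly)

lemma poly_map_poly_of_int_of_int:
  "poly (map_poly of_int P) (of_int x) = (of_int (poly P x) :: 'a::comm_ring_1)"
  by (induction P) (simp_all add: map_poly_pCons)

lemma poly_map_poly_of_int_monom_sum:
  "poly (map_poly of_int (\<Sum>j<n. monom (c j) j)) x = (\<Sum>j<n. of_int (c j) * x ^ j :: 'a::comm_ring_1)"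
  by (simp add: map_poly_of_int_sum map_poly_monom poly_sum poly_monom)

lemma root_of_nonconst_dvd_linear_power:
  fixes A :: "'a::idom poly"
  assumes "A dvd [:-a, 1:] ^ n" and "degree A > 0"
  shows "poly A a = 0"
proof -
  obtain B where AB: "[:-a, 1:] ^ n = A * B" using assms(1) by blast
  have nonzero: "A \<noteq> 0" "B \<noteq> 0" using AB by auto
  have "degree A + degree B = n"
    using AB nonzero degree_mult_eq[of A B] degree_linear_power[of "-a" n] by simp
  moreover have "order a A + order a B = n"
    using AB nonzero order_mult[of A B a] order_power_n_n[of a n] by simp
  ultimately have "order a A + order a B = degree A + degree B" by simp
  moreover have "order a A \<le> degree A" "order a B \<le> degree B"
    using order_degree nonzero by blast+
  ultimately have "order a A = degree A" by linarith
  with assms(2) show ?thesis by (simp add: order_root)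
qed

definition prime_cyclotomic :: "nat \<Rightarrow> int poly" where
  "prime_cyclotomic p = (\<Sum>j<p. [:0, 1:] ^ j)"

lemma poly_map_poly_of_int_prime_cyclotomic:
  "poly (map_poly of_int (prime_cyclotomic p)) z = (\<Sum>j<p. z ^ j :: 'a::comm_ring_1)"
  by (simp add: prime_cyclotomic_def map_poly_of_int_sum map_poly_of_int_power map_poly_pCons
      poly_sum poly_power)

lemma poly_prime_cyclotomic_1: "poly (prime_cyclotomic p) 1 = int p"
  by (simp add: prime_cyclotomic_def poly_sum poly_power)

lemma prime_cyclotomic_nonzero: "p > 0 \<Longrightarrow> prime_cyclotomic p \<noteq> 0"
  using poly_prime_cyclotomic_1[of p] by auto

lemma degree_prime_cyclotomic_le: "degree (prime_cyclotomic p) \<le> p - 1"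
  unfolding prime_cyclotomic_def
proof (rule degree_sum_le)
  fix j assume "j \<in> {..<p}"
  then show "degree ([:0, 1:] ^ j :: int poly) \<le> p - 1"
    by (simp add: degree_linear_power)
qed simp

lemma coeff_0_prime_cyclotomic: "p > 0 \<Longrightarrow> coeff (prime_cyclotomic p) 0 = 1"
  by (simp add: prime_cyclotomic_def coeff_sum coeff_0_power power_0_left sum.delta)

lemma prime_cyclotomic_mod_CHAR:
  assumes "prime CHAR('a::idom)"
  shows "map_poly of_int (prime_cyclotomic CHAR('a)) = ([:-1, 1:] :: 'a poly) ^ (CHAR('a) - 1)"
proof -
  define p where "p = CHAR('a)"
  define X :: "'a poly" where "X = [:0, 1:]"
  have p: "prime CHAR('a poly)" "p > 0" using assms by (simp_all add: p_def prime_gt_0_nat)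
  have "(X + (-1)) ^ p = X ^ p + (-1) ^ p"
    by (rule freshmans_dream) (use p in \<open>simp_all add: p_def\<close>)
  also have "(-1 :: 'a poly) ^ p = - (1 ^ p)"
    by (rule minus_power_prime_CHAR) (use p in \<open>simp_all add: p_def\<close>)
  also have "X ^ p + - (1 ^ p) = (X - 1) * (\<Sum>j<p. X ^ j)"
    by (simp add: power_diff_1_eq)
  also have "X + (-1) = X - 1" by simp
  also have "X - 1 = [:-1, 1:]" by (simp add: X_def one_pCons)
  finally have "[:-1, 1:] * [:-1, 1:] ^ (p - 1) = [:-1, 1:] * (\<Sum>j<p. X ^ j)"
    using p(2) by (simp add: power_eq_if)
  then have "(\<Sum>j<p. X ^ j) = [:-1, 1:] ^ (p - 1)"
    by (subst (asm) mult_left_cancel) simp_all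
  then show ?thesis
    by (simp add: p_def X_def prime_cyclotomic_def map_poly_of_int_sum map_poly_of_int_power
        map_poly_pCons)
qed

text \<open>The type \<^typ>\<open>'a\<close> only provides a ring of characteristic \<open>p\<close>, in which \<open>\<Phi>\<^sub>p\<close> reduces
  to \<open>(X - 1)\<^sup>p\<^sup>-\<^sup>1\<close>; both factors of a nontrivial factorisation would then vanish at
  \<open>1\<close> modulo \<open>p\<close>, whereas \<open>\<Phi>\<^sub>p(1) = p\<close> is not divisible by \<open>p\<^sup>2\<close>.\<close>
lemma prime_cyclotomic_factor_const:
  fixes A B :: "int poly"
  assumes "prime CHAR('a::idom)" and factor: "prime_cyclotomic CHAR('a) = A * B"
  shows "degree A = 0 \<or> degree B = 0"
proof (rule ccontr)
  assume nonconst: "\<not> (degree A = 0 \<or> degree B = 0)"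
  define p where "p = CHAR('a)"
  have p: "p \<ge> 2" using assms(1) by (simp add: p_def prime_ge_2_nat)
  define A' :: "'a poly" where "A' = map_poly of_int A"
  define B' :: "'a poly" where "B' = map_poly of_int B"
  have A'B': "A' * B' = [:-1, 1:] ^ (p - 1)"
    using prime_cyclotomic_mod_CHAR[OF assms(1)] factor
    by (simp add: A'_def B'_def p_def map_poly_of_int_mult)
  then have "A' \<noteq> 0" "B' \<noteq> 0" by auto
  then have "degree A' + degree B' = p - 1"
    using A'B' degree_mult_eq[of A' B'] by (simp add: degree_linear_power)
  moreover have "A \<noteq> 0" "B \<noteq> 0" using \<open>A' \<noteq> 0\<close> \<open>B' \<noteq> 0\<close> by (auto simp: A'_def B'_def)
  then have "degree A + degree B \<le> p - 1"
    using factor degree_prime_cyclotomic_le[of p] degree_mult_eq[of A B] by (simp add: p_def)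
  moreover have "degree A' \<le> degree A" "degree B' \<le> degree B"
    by (simp_all add: A'_def B'_def map_poly_degree_leq)
  ultimately have "degree A' > 0" "degree B' > 0" using nonconst by linarith+
  moreover have "A' dvd [:-1, 1:] ^ (p - 1)" "B' dvd [:-1, 1:] ^ (p - 1)"
    using A'B' by (metis dvd_triv_left, metis dvd_triv_right)
  ultimately have "poly A' 1 = 0" "poly B' 1 = 0"
    by (simp_all add: root_of_nonconst_dvd_linear_power)
  then have "int p dvd poly A 1" "int p dvd poly B 1"
    using poly_map_poly_of_int_of_int[of _ 1, where 'a='a]
    by (simp_all add: A'_def B'_def p_def of_int_eq_0_iff_char_dvd)
  then have "int p * int p dvd poly A 1 * poly B 1" by (rule mult_dvd_mono)
  also have "poly A 1 * poly B 1 = int p"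
    using factor poly_prime_cyclotomic_1[of p] by (simp add: p_def)
  finally have "int p * int p \<le> int p * 1" using p by (auto dest: zdvd_imp_le)
  with p show False by (simp add: mult_le_cancel_left)
qed

lemma irreducible_prime_cyclotomic:
  assumes "prime CHAR('a::idom)"
  shows "irreducible (prime_cyclotomic CHAR('a))"
proof (rule irreducibleI)
  define p where "p = CHAR('a)"
  have p: "p \<ge> 2" using assms by (simp add: p_def prime_ge_2_nat)
  then show "prime_cyclotomic CHAR('a) \<noteq> 0" by (simp add: p_def prime_cyclotomic_nonzero)
  show "\<not> is_unit (prime_cyclotomic CHAR('a))"
  proof
    assume "is_unit (prime_cyclotomic CHAR('a))"
    then obtain c where "prime_cyclotomic p = [:c:]" "is_unit c"
      by (auto simp: is_unit_poly_iff p_def)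
    then have "is_unit (int p)" using poly_prime_cyclotomic_1[of p] by simp
    with p show False by simp
  qed
  have unit_if_const: "is_unit A"
    if "prime_cyclotomic CHAR('a) = A * B" "degree A = 0" for A B :: "int poly"
  proof -
    obtain a where A: "A = [:a:]" using \<open>degree A = 0\<close> by (rule degree_eq_zeroE)
    have "1 = a * coeff B 0"
      using that(1) coeff_0_prime_cyclotomic[of p] p by (simp add: A p_def)
    then have "a dvd 1" by (rule dvdI)
    then show ?thesis by (simp add: A is_unit_const_poly_iff)
  qed
  fix A B assume "prime_cyclotomic CHAR('a) = A * B"
  then show "is_unit A \<or> is_unit B"
    using prime_cyclotomic_factor_const[OF assms] unit_if_const[of A B] unit_if_const[of B A]
    by (metis mult.commute)
qed

section \<open>Conjugates of a primitive \<open>p\<close>-th root of unity\<close>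

lemma zeta_power: "zeta p ^ k = cis (2 * pi * real k / real p)"
  by (simp add: zeta_def DeMoivre mult_ac)

lemma zeta_power_mod:
  assumes "p > 0"
  shows "zeta p ^ k = zeta p ^ (k mod p)"
proof -
  have "zeta p ^ p = 1" using assms by (simp add: zeta_power)
  then have "zeta p ^ (p * (k div p) + k mod p) = zeta p ^ (k mod p)"
    by (simp only: power_add power_mult) simp
  then show ?thesis by simp
qed

lemma zeta_power_eq_1_iff:
  assumes "p > 0"
  shows "zeta p ^ k = 1 \<longleftrightarrow> p dvd k"
proof
  assume "zeta p ^ k = 1"
  then have "zeta p ^ (k mod p) = zeta p ^ 0" using zeta_power_mod[OF assms] by simp
  moreover have "inj_on (\<lambda>k. cis (2 * pi * real k / real p)) {..<p}"
    using bij_betw_roots_unity[OF assms] by (simp add: bij_betw_def)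
  ultimately have "k mod p = 0" using assms unfolding zeta_power by (auto simp: inj_on_def)
  then show "p dvd k" by (simp add: dvd_eq_mod_eq_0)
next
  assume "p dvd k"
  then show "zeta p ^ k = 1" by (subst zeta_power_mod[OF assms]) simp
qed

lemma poly_prime_cyclotomic_zeta_power:
  assumes "p > 0" and "\<not> p dvd g"
  shows "poly (map_poly of_int (prime_cyclotomic p)) (zeta p ^ g) = 0"
proof -
  let ?z = "zeta p ^ g"
  have "?z ^ p = 1" using assms(1) by (simp add: zeta_power_eq_1_iff flip: power_mult)
  moreover have "?z \<noteq> 1" using assms by (simp add: zeta_power_eq_1_iff)
  ultimately have "(\<Sum>j<p. ?z ^ j) = 0" using power_diff_1_eq[of ?z p] by simp
  then show ?thesis by (simp add: poly_map_poly_of_int_prime_cyclotomic)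
qed

lemma least_degree_root_dvd_smult:
  fixes M F :: "int poly" and z :: "'a::comm_ring_1"
  assumes "M \<noteq> 0" and M_root: "poly (map_poly of_int M) z = 0"
    and least: "\<And>N. N \<noteq> 0 \<Longrightarrow> poly (map_poly of_int N) z = 0 \<Longrightarrow> degree M \<le> degree N"
    and F_root: "poly (map_poly of_int F) z = 0"
  obtains c Q where "c \<noteq> 0" "smult c F = M * Q"
proof -
  obtain Q R where QR: "pseudo_divmod F M = (Q, R)" by (cases "pseudo_divmod F M") auto
  define c where "c = lead_coeff M ^ (Suc (degree F) - degree M)"
  have eq: "smult c F = M * Q + R" and R: "R = 0 \<or> degree R < degree M"
    using pseudo_divmod[OF \<open>M \<noteq> 0\<close> QR] by (simp_all add: c_def)
  have "poly (map_poly of_int R) z = 0"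
    using arg_cong[OF eq, of "\<lambda>F. poly (map_poly of_int F) z"] M_root F_root
    by (simp add: map_poly_of_int_add map_poly_of_int_mult map_poly_of_int_smult)
  with R least have "R = 0" by (meson not_le)
  moreover have "c \<noteq> 0" using \<open>M \<noteq> 0\<close> by (simp add: c_def)
  ultimately show ?thesis using eq that by simp
qed

lemma prime_cyclotomic_dvd_least_degree_root:
  fixes M :: "int poly"
  assumes "prime CHAR('a::idom)" and "M \<noteq> 0" and M_root: "poly (map_poly of_int M) (zeta CHAR('a)) = 0"
    and least: "\<And>N. N \<noteq> 0 \<Longrightarrow> poly (map_poly of_int N) (zeta CHAR('a)) = 0
      \<Longrightarrow> degree M \<le> degree N"
  shows "prime_cyclotomic CHAR('a) dvd M"
proof -
  define \<Phi> where "\<Phi> = prime_cyclotomic CHAR('a)"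
  have p: "CHAR('a) > 0" "\<not> CHAR('a) dvd 1" using assms(1) by (auto simp: prime_gt_0_nat)
  have "\<Phi> \<noteq> 0" using p by (simp add: \<Phi>_def prime_cyclotomic_nonzero)
  obtain c Q where "c \<noteq> 0" and cQ: "smult c \<Phi> = M * Q"
    using least_degree_root_dvd_smult[OF \<open>M \<noteq> 0\<close> M_root least]
      poly_prime_cyclotomic_zeta_power[OF p] by (auto simp: \<Phi>_def)
  have "prime_elem \<Phi>"
    using irreducible_prime_cyclotomic[OF assms(1)] by (simp add: \<Phi>_def irreducible_imp_prime_poly)
  moreover have "\<Phi> dvd M * Q" using cQ dvd_smult[of _ _ c] by (metis dvd_refl)
  ultimately consider "\<Phi> dvd M" | "\<Phi> dvd Q" using prime_elem_dvd_mult_iff by blast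
  then show ?thesis
  proof cases
    case 2
    have "Q \<noteq> 0" using cQ \<open>c \<noteq> 0\<close> \<open>\<Phi> \<noteq> 0\<close> by auto
    with 2 have "degree \<Phi> \<le> degree Q" by (rule dvd_imp_degree_le)
    moreover have "degree \<Phi> = degree M + degree Q"
      using arg_cong[OF cQ, of degree] \<open>c \<noteq> 0\<close> \<open>M \<noteq> 0\<close> \<open>Q \<noteq> 0\<close> by (simp add: degree_mult_eq)
    ultimately have "degree M = 0" by linarith
    then obtain m where "M = [:m:]" by (rule degree_eq_zeroE)
    with \<open>M \<noteq> 0\<close> M_root show ?thesis by (simp add: map_poly_pCons)
  qed (simp add: \<Phi>_def)
qed

text \<open>A nonzero integer polynomial \<open>M\<close> of least degree vanishing at \<open>\<zeta>\<close> divides every such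
  polynomial up to a constant factor, and as a multiple of \<open>\<Phi>\<^sub>p\<close> it also vanishes at \<open>\<zeta>\<^sup>g\<close>.\<close>
lemma poly_zeta_power_eq_0:
  fixes P :: "int poly"
  assumes "prime CHAR('a::idom)" and "\<not> CHAR('a) dvd g"
    and P_root: "poly (map_poly of_int P) (zeta CHAR('a)) = 0"
  shows "poly (map_poly of_int P) (zeta CHAR('a) ^ g) = 0"
proof -
  define z where "z = zeta CHAR('a) ^ g"
  have p: "CHAR('a) > 0" "\<not> CHAR('a) dvd 1" using assms(1) by (auto simp: prime_gt_0_nat)
  then have "prime_cyclotomic CHAR('a) \<noteq> 0
      \<and> poly (map_poly of_int (prime_cyclotomic CHAR('a))) (zeta CHAR('a)) = 0"
    using poly_prime_cyclotomic_zeta_power[OF p] by (simp add: prime_cyclotomic_nonzero)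
  then obtain M where M: "M \<noteq> 0" "poly (map_poly of_int M) (zeta CHAR('a)) = 0"
    and least: "\<And>N. N \<noteq> 0 \<Longrightarrow> poly (map_poly of_int N) (zeta CHAR('a)) = 0
      \<Longrightarrow> degree M \<le> degree N"
    using ex_has_least_nat[of "\<lambda>N. N \<noteq> 0 \<and> poly (map_poly of_int N) (zeta CHAR('a)) = 0"
      _ degree] by blast
  have "prime_cyclotomic CHAR('a) dvd M"
    using assms(1) M least by (rule prime_cyclotomic_dvd_least_degree_root)
  then have "poly (map_poly of_int M) z = 0"
    using poly_prime_cyclotomic_zeta_power[OF p(1) assms(2)] by (auto simp: z_def map_poly_of_int_mult)
  moreover obtain c Q where "c \<noteq> 0" "smult c P = M * Q"
    using least_degree_root_dvd_smult[OF M least P_root] by blast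
  moreover from this(2) have "of_int c * poly (map_poly of_int P) z
      = poly (map_poly of_int M) z * (poly (map_poly of_int Q) z :: complex)"
    by (metis map_poly_of_int_mult map_poly_of_int_smult poly_mult poly_smult)
  ultimately show ?thesis by (simp add: z_def)
qed

lemma galois_sigma_eq:
  assumes "prime CHAR('a::idom)" and "\<not> CHAR('a) dvd g"
  shows "galois_sigma CHAR('a) g (\<Sum>j<CHAR('a). of_int (c j) * zeta CHAR('a) ^ j)
    = (\<Sum>j<CHAR('a). of_int (c j) * zeta CHAR('a) ^ (g * j))"
  unfolding galois_sigma_def
proof (rule the_equality)
  define p where "p = CHAR('a)"
  fix w
  assume "\<exists>c'. (\<Sum>j<p. of_int (c j) * zeta p ^ j) = (\<Sum>j<p. of_int (c' j) * zeta p ^ j)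
    \<and> w = (\<Sum>j<p. of_int (c' j) * zeta p ^ (g * j))"
  then obtain c' where c': "(\<Sum>j<p. of_int (c j) * zeta p ^ j) = (\<Sum>j<p. of_int (c' j) * zeta p ^ j)"
    and w: "w = (\<Sum>j<p. of_int (c' j) * zeta p ^ (g * j))" by blast
  define P where "P = (\<Sum>j<p. monom (c j - c' j) j)"
  have "poly (map_poly of_int P) (zeta p) = (\<Sum>j<p. of_int (c j - c' j) * zeta p ^ j :: complex)"
    unfolding P_def by (rule poly_map_poly_of_int_monom_sum)
  also have "\<dots> = 0" using c' by (simp add: algebra_simps sum_subtractf)
  finally have "poly (map_poly of_int P) (zeta p ^ g) = 0"
    using poly_zeta_power_eq_0[OF assms] by (simp add: p_def)
  then have "(\<Sum>j<p. of_int (c j - c' j) * (zeta p ^ g) ^ j :: complex) = 0"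
    unfolding P_def poly_map_poly_of_int_monom_sum .
  then show "w = (\<Sum>j<p. of_int (c j) * zeta p ^ (g * j))"
    using w by (simp add: left_diff_distrib sum_subtractf power_mult)
qed blast

lemma sum_mod_eq_sum_card_fibres:
  fixes f :: "'b \<Rightarrow> nat" and h :: "nat \<Rightarrow> 'a::comm_ring_1"
  assumes "finite S" and "p > 0"
  shows "(\<Sum>x\<in>S. h (f x mod p)) = (\<Sum>j<p. of_nat (card {x\<in>S. f x mod p = j}) * h j)"
proof -
  have "(\<Sum>x\<in>S. h (f x mod p)) = (\<Sum>x\<in>S. \<Sum>j<p. if f x mod p = j then h j else 0)"
    using assms(2) by (simp add: sum.delta')
  also have "\<dots> = (\<Sum>j<p. \<Sum>x\<in>S. if f x mod p = j then h j else 0)"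
    by (rule sum.swap)
  also have "\<dots> = (\<Sum>j<p. of_nat (card {x\<in>S. f x mod p = j}) * h j)"
    using assms(1) by (simp add: sum.If_cases Int_def conj_commute)
  finally show ?thesis .
qed

lemma galois_sigma_sum_zeta_power:
  assumes "prime CHAR('a::idom)" and "\<not> CHAR('a) dvd g" and "finite S"
  shows "galois_sigma CHAR('a) g (\<Sum>x\<in>S. zeta CHAR('a) ^ f x)
    = (\<Sum>x\<in>S. zeta CHAR('a) ^ (g * f x))"
proof -
  define p where "p = CHAR('a)"
  have p: "p > 0" using assms(1) by (simp add: p_def prime_gt_0_nat)
  define c where "c j = int (card {x\<in>S. f x mod p = j})" for j
  have "(\<Sum>x\<in>S. zeta p ^ f x) = (\<Sum>x\<in>S. zeta p ^ (f x mod p))"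
    by (intro sum.cong refl zeta_power_mod[OF p])
  also have "\<dots> = (\<Sum>j<p. of_int (c j) * zeta p ^ j)"
    using sum_mod_eq_sum_card_fibres[OF assms(3) p, of "\<lambda>j. zeta p ^ j" f] by (simp add: c_def)
  finally have "galois_sigma p g (\<Sum>x\<in>S. zeta p ^ f x) = (\<Sum>j<p. of_int (c j) * zeta p ^ (g * j))"
    using galois_sigma_eq[OF assms(1,2)] by (simp add: p_def)
  also have "\<dots> = (\<Sum>x\<in>S. zeta p ^ (g * (f x mod p)))"
    using sum_mod_eq_sum_card_fibres[OF assms(3) p, of "\<lambda>j. zeta p ^ (g * j)" f] by (simp add: c_def)
  also have "\<dots> = (\<Sum>x\<in>S. zeta p ^ (g * f x))"
  proof (rule sum.cong)
    fix x
    have "g * (f x mod p) mod p = g * f x mod p" by (simp add: mod_mult_right_eq)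
    then show "zeta p ^ (g * (f x mod p)) = zeta p ^ (g * f x)"
      by (metis zeta_power_mod[OF p])
  qed simp
  finally show ?thesis by (simp add: p_def)
qed

section \<open>Prime characteristic\<close>

lemma prime_CHAR_finite: "prime CHAR('a::{idom,finite})"
  by (rule prime_CHAR_semidom) (simp add: finite_imp_CHAR_pos)

lemma of_nat_eq_of_nat_below_CHAR:
  assumes "k < CHAR('a::semiring_1_cancel)" and "l < CHAR('a)"
  shows "(of_nat k :: 'a) = of_nat l \<longleftrightarrow> k = l"
  using assms by (auto simp: of_nat_eq_iff_cong_CHAR cong_def)

lemma of_nat_mod_CHAR: "(of_nat (k mod CHAR('a)) :: 'a::semiring_1_cancel) = of_nat k"
  by (simp add: of_nat_eq_iff_cong_CHAR cong_def)

lemma of_nat_power_CHAR: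
  assumes "prime CHAR('a::comm_semiring_1)"
  shows "(of_nat k :: 'a) ^ CHAR('a) = of_nat k"
proof (induction k)
  case 0
  then show ?case using assms by (simp add: prime_gt_0_nat power_0_left)
next
  case (Suc k)
  have "(of_nat k + 1 :: 'a) ^ CHAR('a) = of_nat k ^ CHAR('a) + 1 ^ CHAR('a)"
    by (rule freshmans_dream) (simp_all add: assms)
  with Suc show ?case by (simp add: add.commute)
qed

lemma of_nat_power_CHAR_minus_1:
  assumes "prime CHAR('a::field)" and "\<not> CHAR('a) dvd g"
  shows "(of_nat g :: 'a) ^ (CHAR('a) - 1) = 1"
proof -
  have "(of_nat g :: 'a) \<noteq> 0" using assms(2) by (simp add: of_nat_eq_0_iff_char_dvd)
  moreover have "(of_nat g :: 'a) * of_nat g ^ (CHAR('a) - 1) = of_nat g ^ CHAR('a)"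
    using assms(1) by (simp add: prime_gt_0_nat flip: power_Suc)
  ultimately show ?thesis using of_nat_power_CHAR[OF assms(1), of g] by simp
qed

lemma power_power_eq_self:
  fixes a :: "'a::monoid_mult"
  assumes "a ^ p = a"
  shows "a ^ (p ^ i) = a"
proof (induction i)
  case (Suc i)
  have "a ^ (p ^ Suc i) = (a ^ (p ^ i)) ^ p" by (simp only: power_Suc2 power_mult)
  with Suc assms show ?case by simp
qed simp

text \<open>There are at most \<open>p\<close> roots of \<open>X\<^sup>p - X\<close>, and the \<open>p\<close> elements of the prime field are
  among them.\<close>
lemma power_CHAR_eq_self_imp_of_nat:
  fixes y :: "'a::idom"
  assumes "prime CHAR('a)" and "y ^ CHAR('a) = y"
  obtains k where "k < CHAR('a)" "y = of_nat k"
proof -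
  define p where "p = CHAR('a)"
  have p: "p \<ge> 2" using assms(1) by (simp add: p_def prime_ge_2_nat)
  define P :: "'a poly" where "P = [:0, 1:] ^ p - [:0, 1:]"
  have "coeff P p = 1"
    using p by (simp add: P_def coeff_linear_power[of "0::'a"] coeff_pCons split: nat.split)
  then have "P \<noteq> 0" by auto
  have "degree P \<le> p"
    unfolding P_def by (rule degree_diff_le) (use p in \<open>simp_all add: degree_linear_power\<close>)
  have roots: "{z. poly P z = 0} = {z. z ^ p = z}" by (auto simp: P_def poly_power)
  have "of_nat ` {..<p} \<subseteq> {z::'a. z ^ p = z}"
    using of_nat_power_CHAR[OF assms(1)] by (auto simp: p_def)
  moreover have "finite {z::'a. z ^ p = z}" using poly_roots_finite[OF \<open>P \<noteq> 0\<close>] roots by simp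
  moreover have "card {z::'a. z ^ p = z} \<le> card (of_nat ` {..<p} :: 'a set)"
  proof -
    have "card (of_nat ` {..<p} :: 'a set) = p"
      by (subst card_image) (auto simp: inj_on_def p_def of_nat_eq_of_nat_below_CHAR)
    then show ?thesis
      using card_poly_roots_bound[OF \<open>P \<noteq> 0\<close>] \<open>degree P \<le> p\<close> roots by simp
  qed
  ultimately have "of_nat ` {..<p} = {z::'a. z ^ p = z}" using card_seteq by blast
  with assms(2) that show ?thesis by (auto simp: p_def)
qed

lemma not_dvd_if_ord_nonzero:
  fixes p g :: nat
  assumes "prime p" and "ord p g \<noteq> 0"
  shows "\<not> p dvd g"
proof
  assume "p dvd g"
  moreover have "coprime p g" using assms(2) by (simp add: ord_eq_0)
  ultimately show False using assms(1) by (simp add: coprime_absorb_left)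
qed

section \<open>Finite fields\<close>

definition prime_subspace :: "'a::semiring_1 set \<Rightarrow> bool" where
  "prime_subspace H \<longleftrightarrow>
     0 \<in> H \<and> (\<forall>x\<in>H. \<forall>y\<in>H. x + y \<in> H) \<and> (\<forall>k. \<forall>x\<in>H. of_nat k * x \<in> H)"

lemma prime_subspace_uminus:
  fixes H :: "'a::ring_1 set"
  assumes "CHAR('a) > 0" and "prime_subspace H" and "h \<in> H"
  shows "- h \<in> H"
proof -
  have "of_nat (CHAR('a) - 1) + (1 :: 'a) = 0"
    using assms(1) by (metis Suc_diff_1 add.commute of_nat_CHAR of_nat_Suc)
  then have "of_nat (CHAR('a) - 1) = (- 1 :: 'a)" by (simp add: eq_neg_iff_add_eq_0)
  then have "- h = of_nat (CHAR('a) - 1) * h" by simp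
  with assms(2,3) show ?thesis by (simp add: prime_subspace_def)
qed

lemma prime_subspace_extend:
  fixes H :: "'a::comm_semiring_1 set"
  assumes "prime_subspace H"
  shows "prime_subspace {h + of_nat k * x |h k. h \<in> H}"
  unfolding prime_subspace_def
proof (intro conjI ballI allI)
  show "0 \<in> {h + of_nat k * x |h k. h \<in> H}"
    using assms by (auto simp: prime_subspace_def intro!: exI[of _ 0])
next
  fix a b assume "a \<in> {h + of_nat k * x |h k. h \<in> H}" "b \<in> {h + of_nat k * x |h k. h \<in> H}"
  then obtain h1 k1 h2 k2 where "a = h1 + of_nat k1 * x" "b = h2 + of_nat k2 * x" "h1 \<in> H" "h2 \<in> H"
    by blast
  moreover have "h1 + h2 \<in> H" using calculation assms by (simp add: prime_subspace_def)
  ultimately show "a + b \<in> {h + of_nat k * x |h k. h \<in> H}"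
    by (intro CollectI exI[of _ "h1 + h2"] exI[of _ "k1 + k2"]) (simp add: algebra_simps)
next
  fix m a assume "a \<in> {h + of_nat k * x |h k. h \<in> H}"
  then obtain h k where "a = h + of_nat k * x" "h \<in> H" by blast
  moreover have "of_nat m * h \<in> H" using calculation assms by (simp add: prime_subspace_def)
  ultimately show "of_nat m * a \<in> {h + of_nat k * x |h k. h \<in> H}"
    by (intro CollectI exI[of _ "of_nat m * h"] exI[of _ "m * k"]) (simp add: algebra_simps)
qed

lemma prime_subspace_extend_inj:
  fixes x :: "'a::{field,finite}"
  assumes "prime_subspace H" and "x \<notin> H"
  shows "inj_on (\<lambda>(h, k). h + of_nat k * x) (H \<times> {..<CHAR('a)})"
proof -
  have less_imp_neq: "h1 + of_nat k * x \<noteq> h2 + of_nat l * x"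
    if "h1 \<in> H" "h2 \<in> H" "l < k" "k < CHAR('a)" for h1 h2 k l
  proof
    have char: "prime CHAR('a)" by (rule prime_CHAR_finite)
    assume "h1 + of_nat k * x = h2 + of_nat l * x"
    with that(3) have "of_nat (k - l) * x = h2 + - h1"
      by (simp add: of_nat_diff algebra_simps)
    also have "\<dots> \<in> H"
      using assms(1) that(1,2) prime_subspace_uminus[OF _ assms(1) that(1)] char
      unfolding prime_subspace_def by (simp only: prime_gt_0_nat)
    finally have kl: "of_nat (k - l) * x \<in> H" .
    have "\<not> CHAR('a) dvd (k - l)" using that(3,4) by (auto dest: dvd_imp_le)
    then have "(of_nat (k - l) :: 'a) \<noteq> 0" by (simp add: of_nat_eq_0_iff_char_dvd del: of_nat_diff)
    moreover obtain m where "inverse (of_nat (k - l) :: 'a) = of_nat m"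
      using power_CHAR_eq_self_imp_of_nat[OF char, of "inverse (of_nat (k - l))"]
      by (metis power_inverse of_nat_power_CHAR[OF char])
    ultimately have "x = of_nat m * (of_nat (k - l) * x)" by (metis mult.assoc left_inverse mult_1)
    moreover have "of_nat m * (of_nat (k - l) * x) \<in> H"
      using kl assms(1) by (simp add: prime_subspace_def)
    ultimately show False using assms(2) by metis
  qed
  show ?thesis
  proof (rule inj_onI)
    fix a b assume "a \<in> H \<times> {..<CHAR('a)}" "b \<in> H \<times> {..<CHAR('a)}"
      and "(\<lambda>(h, k). h + of_nat k * x) a = (\<lambda>(h, k). h + of_nat k * x) b"
    moreover obtain h1 k h2 l where "a = (h1, k)" "b = (h2, l)" by fastforce
    ultimately have "h1 \<in> H" "h2 \<in> H" "k < CHAR('a)" "l < CHAR('a)"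
      and eq: "h1 + of_nat k * x = h2 + of_nat l * x" by auto
    then have "k = l" using less_imp_neq by (metis linorder_neqE_nat)
    with eq show "a = b" using \<open>a = (h1, k)\<close> \<open>b = (h2, l)\<close> by simp
  qed
qed

lemma card_prime_subspace_extend:
  fixes x :: "'a::{field,finite}"
  assumes "prime_subspace H" and "x \<notin> H"
  shows "card {h + of_nat k * x |h k. h \<in> H} = card H * CHAR('a)"
proof -
  have "{h + of_nat k * x |h k. h \<in> H} = (\<lambda>(h, k). h + of_nat k * x) ` (H \<times> {..<CHAR('a)})"
  proof (rule Set.set_eqI, rule iffI)
    fix y assume "y \<in> {h + of_nat k * x |h k. h \<in> H}"
    then obtain h k where "h \<in> H" "y = h + of_nat k * x" by blast
    then have "y = (\<lambda>(h, k). h + of_nat k * x) (h, k mod CHAR('a))" by (simp add: of_nat_mod_CHAR)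
    moreover have "k mod CHAR('a) < CHAR('a)" using prime_CHAR_finite[where 'a='a] by (simp add: prime_gt_0_nat)
    ultimately show "y \<in> (\<lambda>(h, k). h + of_nat k * x) ` (H \<times> {..<CHAR('a)})"
      using \<open>h \<in> H\<close> by blast
  qed auto
  then show ?thesis
    by (simp add: card_image prime_subspace_extend_inj[OF assms] card_cartesian_product)
qed

lemma card_prime_subspace:
  fixes H :: "'a::{field,finite} set"
  assumes "prime_subspace H"
  shows "\<exists>n. CARD('a) = CHAR('a) ^ n * card H"
  using assms
proof (induction "CARD('a) - card H" arbitrary: H rule: less_induct)
  case less
  show ?case
  proof (cases "H = UNIV")
    case False
    then obtain x where "x \<notin> H" by blast
    define H' where "H' = {h + of_nat k * x |h k. h \<in> H}"
    have card_H': "card H' = card H * CHAR('a)"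
      unfolding H'_def using less.prems \<open>x \<notin> H\<close> by (rule card_prime_subspace_extend)
    have "H \<noteq> {}" using less.prems by (auto simp: prime_subspace_def)
    then have "card H < card H'"
      using card_H' prime_gt_1_nat[OF prime_CHAR_finite[where 'a='a]] by (simp add: card_gt_0_iff)
    moreover have "card H' \<le> CARD('a)" by (rule card_mono) auto
    ultimately have "CARD('a) - card H' < CARD('a) - card H" by linarith
    moreover have "prime_subspace H'" unfolding H'_def by (rule prime_subspace_extend[OF less.prems])
    ultimately obtain n where "CARD('a) = CHAR('a) ^ n * card H'" using less.hyps by blast
    with card_H' show ?thesis by (metis mult.assoc mult.commute power_Suc)
  qed (auto intro: exI[of _ 0])
qed

lemma CARD_eq_CHAR_power: "CARD('a::{field,finite}) = CHAR('a) ^ field_degree TYPE('a)"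
proof -
  have "prime_subspace {0::'a}" by (simp add: prime_subspace_def)
  then obtain n where n: "CARD('a) = CHAR('a) ^ n" using card_prime_subspace by fastforce
  have "field_degree TYPE('a) = n"
    unfolding field_degree_def
  proof (rule the_equality)
    fix m assume "CHAR('a) ^ m = CARD('a)"
    with n show "m = n" using prime_CHAR_finite[where 'a='a] prime_gt_1_nat power_inject_exp by metis
  qed (use n in simp)
  with n show ?thesis by simp
qed

lemma power_CARD_minus_1_eq_1:
  fixes x :: "'a::{field,finite}"
  assumes "x \<noteq> 0"
  shows "x ^ (CARD('a) - 1) = 1"
proof -
  define U where "U = UNIV - {0 :: 'a}"
  have "(\<Prod>y\<in>U. x * y) = (\<Prod>y\<in>U. y)"
    by (rule prod.reindex_bij_witness[of _ "\<lambda>y. y / x" "\<lambda>y. x * y"])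
      (use assms in \<open>auto simp: U_def\<close>)
  moreover have "(\<Prod>y\<in>U. x * y) = x ^ card U * (\<Prod>y\<in>U. y)" by (simp add: prod.distrib)
  moreover have "(\<Prod>y\<in>U. y) \<noteq> 0" by (simp add: U_def)
  moreover have "card U = CARD('a) - 1" by (simp add: U_def card_Diff_singleton)
  ultimately show ?thesis by simp
qed

lemma power_CARD_eq_self: "(x :: 'a::{field,finite}) ^ CARD('a) = x"
proof (cases "x = 0")
  case False
  have "CARD('a) = Suc (CARD('a) - 1)" by (simp add: Suc_diff_1)
  then have "x ^ CARD('a) = x * x ^ (CARD('a) - 1)" by (metis power_Suc)
  also have "\<dots> = x" by (simp only: power_CARD_minus_1_eq_1[OF False] mult_1_right)
  finally show ?thesis .
qed simp

lemma power_mod_eq_of_power_eq_1: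
  fixes a :: "'a::monoid_mult"
  assumes "a ^ m = 1"
  shows "a ^ (k mod m) = a ^ k"
proof -
  have "a ^ k = a ^ (m * (k div m) + k mod m)" by simp
  also have "\<dots> = (a ^ m) ^ (k div m) * a ^ (k mod m)" by (simp only: power_add power_mult)
  finally show ?thesis using assms by simp
qed

lemma inj_power_coprime_CARD:
  assumes "coprime s (CARD('a::{field,finite}) - 1)" and "s > 0"
  shows "inj (\<lambda>x::'a. x ^ s)"
proof -
  define m where "m = CARD('a) - 1"
  have "card {0 :: 'a, 1} \<le> CARD('a)" by (rule card_mono) simp_all
  then have "m > 0" by (simp add: m_def)
  obtain t where "[s * t = 1] (mod m)" using cong_solve_coprime_nat assms(1) by (auto simp: m_def)
  then have st: "s * (t + m) mod m = 1 mod m" by (simp add: cong_def distrib_left)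
  have inverse_power: "x ^ (s * (t + m)) = x" for x :: 'a
  proof (cases "x = 0")
    case False
    then have period: "x ^ m = 1" unfolding m_def by (rule power_CARD_minus_1_eq_1)
    have "x ^ (s * (t + m)) = x ^ (s * (t + m) mod m)"
      by (rule power_mod_eq_of_power_eq_1[OF period, symmetric])
    also have "\<dots> = x ^ (1 mod m)" by (simp only: st)
    also have "\<dots> = x" using period \<open>m > 0\<close> by (cases "m = 1") simp_all
    finally show ?thesis .
  qed (use assms(2) \<open>m > 0\<close> in simp)
  show ?thesis
  proof (rule injI)
    fix x y :: 'a
    assume "x ^ s = y ^ s"
    then have "(x ^ s) ^ (t + m) = (y ^ s) ^ (t + m)" by simp
    then show "x = y" using inverse_power[of x] inverse_power[of y] by (simp add: power_mult)
  qed
qed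

lemma odd_if_coprime_CARD_minus_1:
  assumes "odd CHAR('a::{field,finite})" and "coprime s (CARD('a) - 1)"
  shows "odd s"
proof
  assume "even s"
  have "odd CARD('a)" using assms(1) by (simp add: CARD_eq_CHAR_power)
  then have "even (CARD('a) - 1)" by simp
  with \<open>even s\<close> have "is_unit (2 :: nat)" by (rule coprime_common_divisor[OF assms(2)])
  then show False by simp
qed

lemma abs_trace_power_CHAR: "abs_trace (x :: 'a::{field,finite}) ^ CHAR('a) = abs_trace x"
proof -
  define p where "p = CHAR('a)"
  define n where "n = field_degree TYPE('a)"
  define f where "f i = x ^ (p ^ i)" for i
  have "abs_trace x ^ p = (\<Sum>i<n. f i ^ p)"
    unfolding abs_trace_def p_def n_def f_def by (rule freshmans_dream_sum) (simp_all add: prime_CHAR_finite)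
  also have "\<dots> = (\<Sum>i<n. f (Suc i))" by (simp add: f_def power_mult[symmetric] mult.commute)
  also have "\<dots> = (\<Sum>i<n. f i)"
  proof -
    have "f n = f 0"
      using power_CARD_eq_self[of x] CARD_eq_CHAR_power[where 'a='a] by (simp add: f_def p_def n_def)
    then show ?thesis using sum.lessThan_Suc_shift[of f n] by simp
  qed
  finally show ?thesis by (simp add: abs_trace_def f_def p_def n_def)
qed

lemma abs_trace_nat_less: "abs_trace_nat (x :: 'a::{field,finite}) < CHAR('a)"
  and of_nat_abs_trace_nat: "of_nat (abs_trace_nat x) = abs_trace x"
proof -
  obtain k where k: "k < CHAR('a)" "abs_trace x = of_nat k"
    using power_CHAR_eq_self_imp_of_nat[OF prime_CHAR_finite abs_trace_power_CHAR] by blast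
  have "abs_trace_nat x = k"
    unfolding abs_trace_nat_def by (rule the_equality) (use k of_nat_eq_of_nat_below_CHAR in auto)
  with k show "abs_trace_nat x < CHAR('a)" "of_nat (abs_trace_nat x) = abs_trace x" by simp_all
qed

lemma abs_trace_of_nat_mult: "abs_trace (of_nat g * (y :: 'a::{field,finite})) = of_nat g * abs_trace y"
proof -
  have "(of_nat g :: 'a) ^ (CHAR('a) ^ i) = of_nat g" for i
    by (rule power_power_eq_self) (rule of_nat_power_CHAR[OF prime_CHAR_finite])
  then show ?thesis by (simp add: abs_trace_def power_mult_distrib sum_distrib_left)
qed

lemma abs_trace_nat_of_nat_mult:
  "abs_trace_nat (of_nat g * (y :: 'a::{field,finite})) = g * abs_trace_nat y mod CHAR('a)"
proof -
  have "(of_nat (g * abs_trace_nat y mod CHAR('a)) :: 'a) = of_nat (g * abs_trace_nat y)"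
    by (rule of_nat_mod_CHAR)
  also have "\<dots> = of_nat (abs_trace_nat (of_nat g * y))"
    by (simp add: of_nat_abs_trace_nat abs_trace_of_nat_mult)
  finally show ?thesis
    using abs_trace_nat_less[of "of_nat g * y"] prime_CHAR_finite[where 'a='a]
    by (simp add: of_nat_eq_of_nat_below_CHAR prime_gt_0_nat)
qed

lemma psi_of_nat_mult: "psi (of_nat g * (y :: 'a::{field,finite})) = zeta CHAR('a) ^ (g * abs_trace_nat y)"
  unfolding psi_def abs_trace_nat_of_nat_mult
  by (rule zeta_power_mod[symmetric]) (simp add: prime_CHAR_finite prime_gt_0_nat)

section \<open>Cycle types\<close>

lemma cycle_type_eq_replicate_1:
  assumes "finite A" and "\<And>w. w \<in> A \<Longrightarrow> f w = w"
  shows "cycle_type f A = replicate_mset (card A) 1"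
proof -
  have "orbit_of f w = {w}" if "w \<in> A" for w
    using funpow_mod_eq[where n = 1 and f = f and x = w] assms(2)[OF that] by (auto simp: orbit_of_def)
  then have "orbit_of f ` A = (\<lambda>w. {w}) ` A" by simp
  then have "cycle_type f A = image_mset card (image_mset (\<lambda>w. {w}) (mset_set A))"
    by (simp add: cycle_type_def image_mset_mset_set inj_on_def)
  also have "\<dots> = replicate_mset (card A) 1"
    by (simp add: multiset.map_comp o_def image_mset_const_eq)
  finally show ?thesis .
qed

lemma cycle_type_le_period:
  assumes "e > 0" and "\<And>w. w \<in> A \<Longrightarrow> (f ^^ e) w = w"
  shows "\<forall>k \<in># cycle_type f A. k \<le> e"
proof
  fix k assume "k \<in># cycle_type f A"
  then obtain C where "C \<in># mset_set (orbit_of f ` A)" "k = card C"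
    by (auto simp: cycle_type_def)
  moreover from this(1) have "C \<in> orbit_of f ` A"
    by (cases "finite (orbit_of f ` A)") auto
  ultimately obtain w where "w \<in> A" "k = card (orbit_of f w)" by blast
  have "orbit_of f w \<subseteq> (\<lambda>n. (f ^^ n) w) ` {..<e}"
  proof
    fix y assume "y \<in> orbit_of f w"
    then obtain n where "y = (f ^^ n) w" by (auto simp: orbit_of_def)
    then have "y = (f ^^ (n mod e)) w" using funpow_mod_eq[OF assms(2)[OF \<open>w \<in> A\<close>]] by simp
    then show "y \<in> (\<lambda>n. (f ^^ n) w) ` {..<e}" using assms(1) by simp
  qed
  then have "card (orbit_of f w) \<le> card ((\<lambda>n. (f ^^ n) w) ` {..<e})" by (rule card_mono[rotated]) simp
  also have "\<dots> \<le> e" using card_image_le[of "{..<e}"] by simp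
  finally show "k \<le> e" using \<open>k = card (orbit_of f w)\<close> by simp
qed

section \<open>The automorphism on Weil sums\<close>

lemma galois_sigma_weil_sum:
  fixes c :: "'a::{field,finite}"
  assumes "\<not> CHAR('a) dvd g" and "c ^ s = of_nat g" and "s > 0"
  shows "galois_sigma CHAR('a) g (weil_sum s v) = weil_sum s (of_nat g / c * v)"
proof -
  define G :: 'a where "G = of_nat g"
  have "G \<noteq> 0" using assms(1) by (simp add: G_def of_nat_eq_0_iff_char_dvd)
  then have "c \<noteq> 0" using assms(2,3) by (auto simp: G_def power_0_left)
  have "galois_sigma CHAR('a) g (weil_sum s v)
      = galois_sigma CHAR('a) g (\<Sum>x\<in>UNIV. zeta CHAR('a) ^ abs_trace_nat (x ^ s - v * x))"
    by (simp add: weil_sum_def psi_def)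
  also have "\<dots> = (\<Sum>x\<in>UNIV. zeta CHAR('a) ^ (g * abs_trace_nat (x ^ s - v * x)))"
    by (rule galois_sigma_sum_zeta_power[OF prime_CHAR_finite assms(1)]) simp
  also have "\<dots> = (\<Sum>x\<in>UNIV. psi (G * (x ^ s - v * x)))"
    by (simp add: psi_of_nat_mult G_def)
  also have "\<dots> = (\<Sum>y\<in>UNIV. psi (G * ((y / c) ^ s - v * (y / c))))"
    by (rule sum.reindex_bij_witness[of _ "\<lambda>y. y / c" "\<lambda>x. x * c"]) (use \<open>c \<noteq> 0\<close> in auto)
  also have "\<dots> = (\<Sum>y\<in>UNIV. psi (y ^ s - G / c * v * y))"
  proof (intro sum.cong refl arg_cong[where f = psi])
    fix y
    have "G * (y / c) ^ s = y ^ s" using assms(2) \<open>G \<noteq> 0\<close> by (simp add: power_divide G_def)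
    then show "G * ((y / c) ^ s - v * (y / c)) = y ^ s - G / c * v * y"
      by (simp add: right_diff_distrib)
  qed
  finally show ?thesis by (simp add: weil_sum_def G_def)
qed

lemma funpow_galois_sigma_weil_sum:
  fixes c :: "'a::{field,finite}"
  assumes "\<not> CHAR('a) dvd g" and "c ^ s = of_nat g" and "s > 0"
  shows "(galois_sigma CHAR('a) g ^^ n) (weil_sum s v) = weil_sum s ((of_nat g / c) ^ n * v)"
  by (induction n) (simp_all add: galois_sigma_weil_sum[OF assms] mult.assoc)

lemma galois_sigma_power_fixes_weil_spectrum:
  fixes c :: "'a::{field,finite}"
  assumes "\<not> CHAR('a) dvd g" and "c ^ s = of_nat g" and "s > 0" and "(of_nat g / c) ^ k = 1"
    and "w \<in> weil_spectrum TYPE('a) s"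
  shows "(galois_sigma CHAR('a) g ^^ k) w = w"
  using assms(5) funpow_galois_sigma_weil_sum[OF assms(1-3)] assms(4)
  by (auto simp: weil_spectrum_def)

text \<open>The paper's multiplier \<open>\<gamma>\<^sup>1\<^sup>-\<^sup>1\<^sup>/\<^sup>s\<close> appears as \<open>G / c\<close> with \<open>c\<^sup>s = G\<close>; its \<open>s\<close>-th power is
  \<open>G\<^sup>s\<^sup>-\<^sup>1\<close>, so it is a root of unity whenever a power of \<open>G\<^sup>s\<^sup>-\<^sup>1\<close> is.\<close>
lemma power_divide_root_eq_1:
  fixes G c :: "'a::field"
  assumes "inj (\<lambda>x::'a. x ^ s)" and "c ^ s = G" and "G \<noteq> 0" and "G ^ (k * (s - 1)) = 1"
    and "s > 0"
  shows "(G / c) ^ k = 1"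
proof -
  have "(G / c) ^ s = G ^ (s - 1)"
    using assms(2,3,5) by (simp add: power_divide power_diff)
  then have "((G / c) ^ k) ^ s = G ^ (k * (s - 1))"
    by (metis power_mult mult.commute)
  with assms(4) have "((G / c) ^ k) ^ s = 1 ^ s" by simp
  then show ?thesis using injD[OF assms(1)] by blast
qed

lemma power_root_exists_coprime_CARD:
  fixes y :: "'a::{field,finite}"
  assumes "coprime s (CARD('a) - 1)" and "s > 0"
  obtains c where "c ^ s = y"
proof -
  have "surj (\<lambda>x::'a. x ^ s)"
    using inj_power_coprime_CARD[OF assms] by (simp add: finite_UNIV_inj_surj)
  with that show ?thesis by (metis surjD)
qed

lemma cycle_type_galois_sigma_CHAR_2:
  assumes "CHAR('a::{field,finite}) = 2" and "\<not> CHAR('a) dvd g"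
    and "coprime s (CARD('a) - 1)" and "s > 0"
  shows "cycle_type (galois_sigma CHAR('a) g) (weil_spectrum TYPE('a) s)
    = replicate_mset (card (weil_spectrum TYPE('a) s)) 1"
proof -
  obtain c :: 'a where c: "c ^ s = of_nat g" using power_root_exists_coprime_CARD[OF assms(3,4)] .
  have "g mod 2 = 1" using assms(1,2) by (simp add: odd_iff_mod_2_eq_one)
  then have "(of_nat g :: 'a) = 1" using of_nat_mod_CHAR[of g, where 'a='a] assms(1) by simp
  then have "(of_nat g / c) ^ 1 = 1"
    by (intro power_divide_root_eq_1[OF inj_power_coprime_CARD[OF assms(3,4)] c]) (simp_all add: assms(4))
  from galois_sigma_power_fixes_weil_spectrum[OF assms(2) c assms(4) this] show ?thesis
    by (intro cycle_type_eq_replicate_1) (simp_all add: weil_spectrum_def)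
qed

lemma cycle_type_galois_sigma_odd_CHAR:
  assumes "odd CHAR('a::{field,finite})" and "\<not> CHAR('a) dvd g"
    and "coprime s (CARD('a) - 1)" and "s > 0"
  shows "\<forall>k \<in># cycle_type (galois_sigma CHAR('a) g) (weil_spectrum TYPE('a) s).
    k \<le> (CHAR('a) - 1) div 2"
proof -
  define G :: 'a where "G = of_nat g"
  obtain c :: 'a where c: "c ^ s = G" using power_root_exists_coprime_CARD[OF assms(3,4)] .
  obtain e where e: "CHAR('a) = 2 * e + 1" using assms(1) by (rule oddE)
  then have "e > 0" using prime_ge_2_nat[OF prime_CHAR_finite[where 'a='a]] by simp
  obtain h where "s = 2 * h + 1" using odd_if_coprime_CARD_minus_1[OF assms(1,3)] by (rule oddE)
  with e have "e * (s - 1) = (CHAR('a) - 1) * h" by simp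
  then have "G ^ (e * (s - 1)) = (G ^ (CHAR('a) - 1)) ^ h" by (simp add: power_mult)
  also have "\<dots> = 1"
    using of_nat_power_CHAR_minus_1[OF prime_CHAR_finite assms(2)] by (simp add: G_def)
  finally have "(G / c) ^ e = 1"
    using assms(2,4) power_divide_root_eq_1[OF inj_power_coprime_CARD[OF assms(3,4)] c]
    by (simp add: G_def of_nat_eq_0_iff_char_dvd)
  then have "\<forall>k \<in># cycle_type (galois_sigma CHAR('a) g) (weil_spectrum TYPE('a) s). k \<le> e"
    using galois_sigma_power_fixes_weil_spectrum[OF assms(2) c[unfolded G_def] assms(4)]
    by (intro cycle_type_le_period[OF \<open>e > 0\<close>]) (simp add: G_def)
  with e show ?thesis by simp
qed

theorem lemma2p4:
  fixes s :: nat and g :: nat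
  assumes "s > 0"
    and "coprime s (CARD('a::{field,finite}) - 1)"
    and "g < CHAR('a)" and "ord (CHAR('a)) g = CHAR('a) - 1"
  shows "(CHAR('a) = 2 \<longrightarrow>
            cycle_type (galois_sigma (CHAR('a)) g) (weil_spectrum TYPE('a) s)
              = replicate_mset (card (weil_spectrum TYPE('a) s)) 1)
       \<and> (odd (CHAR('a)) \<longrightarrow>
            (\<forall>k \<in># cycle_type (galois_sigma (CHAR('a)) g) (weil_spectrum TYPE('a) s).
               k \<le> (CHAR('a) - 1) div 2))"
proof -
  have "ord CHAR('a) g \<noteq> 0" using assms(4) prime_ge_2_nat[OF prime_CHAR_finite[where 'a='a]] by simp
  then have "\<not> CHAR('a) dvd g" by (rule not_dvd_if_ord_nonzero[OF prime_CHAR_finite])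
  then show ?thesis
    using cycle_type_galois_sigma_CHAR_2 cycle_type_galois_sigma_odd_CHAR assms(1,2) by blast
qed

end
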